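(* Let $d\geq 1$ and let $\sigma=(s_d,s_{d-1},\ldots,s_0)$ be any sequence of signs $s_j\in\{+,-\}$ with $s_d=+$. If $d$ is even and $s_0=+$ (resp. $s_0=-$), then there exists a real polynomial $P=\sum_{j=0}^d a_jx^j$ of degree $d$ with all $a_j\neq 0$ and $\operatorname{sgn} a_j=s_j$ for all $j$, which has exactly $0$ positive and $0$ negative roots (resp. exactly $1$ positive and $1$ negative root). If $d$ is odd and $s_0=+$ (resp. $s_0=-$), then there exists such a polynomial $P$ with sign pattern $\sigma$ having exactly $0$ positive and $1$ negative root (resp. exactly $1$ positive and $0$ negative roots).
   Context: A real polynomial $P=\sum_{j=0}^d a_jx^j$ of degree $d$ with all coefficients nonzero is said to define the sign pattern $\sigma=(s_d,\ldots,s_0)$ if $s_j=\operatorname{sgn}a_j$ for all $j$. A pair $(pos,neg)$ is realized for $\sigma$ by $P$ if $P$ defines $\sigma$ and has exactly $pos$ positive and exactly $neg$ negative real roots. *)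

theory Defs
  imports "HOL-Computational_Algebra.Polynomial"
begin

text \<open>A sign pattern of length d+1 is represented by a function s :: nat => real with
  s j in {1,-1} for j <= d (only values at j <= d matter).\<close>

definition defines_sign_pattern :: "real poly \<Rightarrow> nat \<Rightarrow> (nat \<Rightarrow> real) \<Rightarrow> bool" where
  "defines_sign_pattern p d s \<longleftrightarrow>
     degree p = d \<and> (\<forall>j\<le>d. coeff p j \<noteq> 0 \<and> sgn (coeff p j) = s j)"

definition num_pos_roots :: "real poly \<Rightarrow> nat" where
  "num_pos_roots p = (\<Sum>x\<in>{x. x > 0 \<and> poly p x = 0}. order x p)"

definition num_neg_roots :: "real poly \<Rightarrow> nat" where
  "num_neg_roots p = (\<Sum>x\<in>{x. x < 0 \<and> poly p x = 0}. order x p)"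

definition realizes :: "real poly \<Rightarrow> nat \<Rightarrow> (nat \<Rightarrow> real) \<Rightarrow> nat \<Rightarrow> nat \<Rightarrow> bool" where
  "realizes p d s pos neg \<longleftrightarrow>
     defines_sign_pattern p d s \<and> num_pos_roots p = pos \<and> num_neg_roots p = neg"

end

theory Submission
  imports Defs
begin

text \<open>Take \<open>P(x) = x^d + s 0 + \<epsilon> \<Sum>0<j<d. s j x^j\<close> with \<open>\<epsilon> = 1/(16d)\<close>. The perturbation
  is at most \<open>(1 + |x|^d)/16\<close>, so every real root satisfies \<open>1/2 \<le> |x|^d \<le> 2\<close> and
  \<open>sgn (x^d) = -s 0\<close>; in that range the leading term \<open>d x^(d-1)\<close> dominates \<open>P'\<close>. By Rolle,
  \<open>P\<close> therefore has at most one root on each half-line, and it is simple. Comparing the signs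
  of \<open>P(0) = s 0\<close> and \<open>P(\<plusminus>2)\<close> decides which half-lines actually carry a root.\<close>

lemma order_eq_1_if_pderiv_nonzero:
  fixes p :: "'a::{idom,semiring_char_0} poly"
  assumes "p \<noteq> 0" "poly p x = 0" "poly (pderiv p) x \<noteq> 0"
  shows "order x p = 1"
  using order_pderiv[OF assms(1,2)] order_0I[OF assms(3)] by simp

lemma sum_order_roots_eq_indicator:
  fixes p :: "real poly"
  assumes "p \<noteq> 0"
    and no_critical_point: "\<And>a b c. Q a \<Longrightarrow> Q b \<Longrightarrow> poly p a = 0 \<Longrightarrow> poly p b = 0 \<Longrightarrow> a \<le> c \<Longrightarrow> c \<le> b
        \<Longrightarrow> poly (pderiv p) c \<noteq> 0"
  shows "(\<Sum>x | Q x \<and> poly p x = 0. order x p) = (if \<exists>x. Q x \<and> poly p x = 0 then 1 else 0)"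
proof (cases "\<exists>x. Q x \<and> poly p x = 0")
  case True
  then obtain r where r: "Q r" "poly p r = 0" by blast
  have no_two_roots: False if ab: "a < b" "Q a" "Q b" "poly p a = 0" "poly p b = 0" for a b
  proof -
    obtain c where "a < c" "c < b" "poly (pderiv p) c = 0"
      using poly_MVT[OF ab(1), of p] ab(4,5) by auto
    then show False using no_critical_point[OF ab(2-5)] by simp
  qed
  have "x = r" if "Q x" "poly p x = 0" for x
    using no_two_roots[of x r] no_two_roots[of r x] that r by (cases x r rule: linorder_cases) auto
  then have "{x. Q x \<and> poly p x = 0} = {r}" using r by blast
  moreover have "order r p = 1"
    using order_eq_1_if_pderiv_nonzero[OF assms(1) r(2)] no_critical_point[OF r(1) r(1) r(2) r(2)] by simp
  ultimately show ?thesis using True by simp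
next
  case False
  then have no_roots: "{x. Q x \<and> poly p x = 0} = {}" by blast
  show ?thesis using False by (simp only: no_roots sum.empty if_False)
qed

lemma abs_power_le_one_plus:
  fixes x :: real
  assumes "j \<le> d"
  shows "\<bar>x\<bar> ^ j \<le> 1 + \<bar>x\<bar> ^ d"
proof (cases "\<bar>x\<bar> \<le> 1")
  case True
  then have "\<bar>x\<bar> ^ j \<le> 1" by (simp add: power_le_one)
  then show ?thesis by (simp add: add_increasing2)
next
  case False
  then have "\<bar>x\<bar> ^ j \<le> \<bar>x\<bar> ^ d" using assms by (intro power_increasing) auto
  then show ?thesis by simp
qed

lemma abs_power_between:
  fixes a b c :: real
  assumes "a \<le> c" "c \<le> b" "0 < a \<or> b < 0"
    and "L \<le> \<bar>a\<bar> ^ n" "\<bar>a\<bar> ^ n \<le> U" "L \<le> \<bar>b\<bar> ^ n" "\<bar>b\<bar> ^ n \<le> U"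
  shows "L \<le> \<bar>c\<bar> ^ n \<and> \<bar>c\<bar> ^ n \<le> U"
proof (cases "0 < a")
  case True
  then have "\<bar>a\<bar> ^ n \<le> \<bar>c\<bar> ^ n" "\<bar>c\<bar> ^ n \<le> \<bar>b\<bar> ^ n"
    using assms(1,2) by (auto intro: power_mono)
  then show ?thesis using assms by linarith
next
  case False
  then have "\<bar>b\<bar> ^ n \<le> \<bar>c\<bar> ^ n" "\<bar>c\<bar> ^ n \<le> \<bar>a\<bar> ^ n"
    using assms(1-3) by (auto intro: power_mono)
  then show ?thesis using assms by linarith
qed

locale sign_pattern =
  fixes d :: nat and s :: "nat \<Rightarrow> real"
  assumes degree_pos: "d \<ge> 1"
    and signs: "\<forall>j\<le>d. s j = 1 \<or> s j = -1"
begin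

definition eps :: real where "eps = 1 / (16 * real d)"

definition middle :: "real \<Rightarrow> real" where
  "middle x = (\<Sum>j\<in>{1..<d}. s j * x ^ j)"

definition P :: "real poly" where
  "P = monom 1 d + [:s 0:] + smult eps (\<Sum>j\<in>{1..<d}. monom (s j) j)"

lemma eps_pos: "eps > 0"
  using degree_pos by (simp add: eps_def)

lemma abs_s: "j \<le> d \<Longrightarrow> \<bar>s j\<bar> = 1"
  using signs by auto

lemma poly_P: "poly P x = x ^ d + s 0 + eps * middle x"
  by (simp add: P_def middle_def poly_sum poly_monom)

lemma poly_pderiv_P:
  "poly (pderiv P) x = real d * x ^ (d - 1) + eps * (\<Sum>j\<in>{1..<d}. real j * s j * x ^ (j - 1))"
proof -
  have "pderiv (\<Sum>j\<in>{1..<d}. monom (s j) j) = (\<Sum>j\<in>{1..<d}. pderiv (monom (s j) j))"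
    using higher_pderiv_sum[of 1] by simp
  then show ?thesis
    by (simp add: P_def poly_sum poly_monom pderiv_add pderiv_smult pderiv_monom pderiv_pCons)
qed

lemma coeff_P:
  "coeff P k = (if k = d then 1 else if k = 0 then s 0 else if k < d then eps * s k else 0)"
  using degree_pos by (auto simp: P_def coeff_sum coeff_pCons split: nat.split)

lemma P_defines_sign_pattern:
  assumes "s d = 1"
  shows "defines_sign_pattern P d s"
proof -
  have "degree P = d"
  proof (rule antisym)
    show "degree P \<le> d" by (rule degree_le) (simp add: coeff_P)
    show "d \<le> degree P" by (rule le_degree) (simp add: coeff_P)
  qed
  moreover have "coeff P j \<noteq> 0 \<and> sgn (coeff P j) = s j" if "j \<le> d" for j
    using that abs_s[OF that] assms eps_pos
    by (auto simp: coeff_P sgn_mult abs_if split: if_splits)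
  ultimately show ?thesis unfolding defines_sign_pattern_def by blast
qed

lemma P_nonzero: "P \<noteq> 0"
  using coeff_P[of d] by auto

lemma perturbation_bound: "\<bar>eps * middle x\<bar> \<le> (1 + \<bar>x\<bar> ^ d) / 16"
proof -
  have "\<bar>middle x\<bar> \<le> (\<Sum>j\<in>{1..<d}. \<bar>s j * x ^ j\<bar>)"
    unfolding middle_def by (rule sum_abs)
  also have "\<dots> \<le> real (d - 1) * (1 + \<bar>x\<bar> ^ d)"
    using sum_bounded_above[of "{1..<d}" "\<lambda>j. \<bar>s j * x ^ j\<bar>" "1 + \<bar>x\<bar> ^ d"]
    by (simp add: abs_mult power_abs abs_s abs_power_le_one_plus)
  finally have "eps * \<bar>middle x\<bar> \<le> eps * (real (d - 1) * (1 + \<bar>x\<bar> ^ d))"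
    using eps_pos by (simp add: mult_left_mono)
  also have "\<dots> \<le> (1 + \<bar>x\<bar> ^ d) / 16"
    using degree_pos by (simp add: eps_def field_simps)
  finally show ?thesis using eps_pos by (simp add: abs_mult)
qed

lemma root_bounds:
  assumes "poly P x = 0"
  shows "1/2 \<le> \<bar>x\<bar> ^ d \<and> \<bar>x\<bar> ^ d \<le> 2 \<and> x ^ d * s 0 < 0"
proof -
  define y where "y = x ^ d"
  have "y + s 0 + eps * middle x = 0" using assms by (simp add: poly_P y_def)
  moreover have "\<bar>eps * middle x\<bar> \<le> (1 + \<bar>y\<bar>) / 16"
    using perturbation_bound[of x] by (simp add: y_def power_abs)
  moreover have "s 0 = 1 \<or> s 0 = -1" using signs by simp
  ultimately have "1/2 \<le> \<bar>y\<bar> \<and> \<bar>y\<bar> \<le> 2 \<and> y * s 0 < 0"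
    by (auto simp: abs_if split: if_splits)
  then show ?thesis by (simp add: y_def power_abs)
qed

lemma sgn_poly_P_far:
  assumes "2 \<le> \<bar>x\<bar> ^ d"
  shows "sgn (poly P x) = sgn (x ^ d)"
proof -
  define y where "y = x ^ d"
  have "2 \<le> \<bar>y\<bar>" "\<bar>eps * middle x\<bar> \<le> (1 + \<bar>y\<bar>) / 16"
    using assms perturbation_bound[of x] by (simp_all add: y_def power_abs)
  moreover have "s 0 = 1 \<or> s 0 = -1" using signs by simp
  ultimately have "sgn (y + s 0 + eps * middle x) = sgn y"
    by (auto simp: sgn_if abs_if split: if_splits)
  then show ?thesis by (simp add: poly_P y_def)
qed

lemma poly_P_0: "poly P 0 = s 0"
  using degree_pos by (simp add: poly_P middle_def)

lemma pderiv_P_nonzero: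
  assumes lower: "1/2 \<le> \<bar>x\<bar> ^ d" and upper: "\<bar>x\<bar> ^ d \<le> 2"
  shows "poly (pderiv P) x \<noteq> 0"
proof -
  have "\<bar>x\<bar> \<le> 2"
  proof (cases "\<bar>x\<bar> \<le> 1")
    case False
    then have "\<bar>x\<bar> ^ 1 \<le> \<bar>x\<bar> ^ d" using degree_pos by (intro power_increasing) auto
    then show ?thesis using upper by simp
  qed simp
  moreover have "\<bar>x\<bar> ^ d = \<bar>x\<bar> * \<bar>x\<bar> ^ (d - 1)"
    using degree_pos by (simp flip: power_Suc)
  ultimately have "1/4 \<le> \<bar>x\<bar> ^ (d - 1)"
    using lower mult_right_mono[of "\<bar>x\<bar>" 2 "\<bar>x\<bar> ^ (d - 1)"] by simp
  then have "real d * (1/4) \<le> real d * \<bar>x\<bar> ^ (d - 1)"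
    by (rule mult_left_mono) simp
  then have leading: "real d / 4 \<le> \<bar>real d * x ^ (d - 1)\<bar>"
    by (simp add: abs_mult power_abs)
  have "\<bar>\<Sum>j\<in>{1..<d}. real j * s j * x ^ (j - 1)\<bar> \<le> (\<Sum>j\<in>{1..<d}. \<bar>real j * s j * x ^ (j - 1)\<bar>)"
    by (rule sum_abs)
  also have "\<dots> \<le> of_nat (card {1..<d}) * (real d * 3)"
  proof (rule sum_bounded_above)
    fix j assume j: "j \<in> {1..<d}"
    have "\<bar>x\<bar> ^ (j - 1) \<le> 3"
      using abs_power_le_one_plus[of "j - 1" d x] j upper by force
    then have "real j * \<bar>x\<bar> ^ (j - 1) \<le> real d * 3"
      using j by (intro mult_mono) auto
    then show "\<bar>real j * s j * x ^ (j - 1)\<bar> \<le> real d * 3"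
      using j by (simp add: abs_mult power_abs abs_s)
  qed
  also have "\<dots> = real (d - 1) * (real d * 3)" by simp
  finally have "\<bar>eps * (\<Sum>j\<in>{1..<d}. real j * s j * x ^ (j - 1))\<bar> \<le> 3 * real (d - 1) / 16"
    using eps_pos degree_pos by (simp add: abs_mult eps_def field_simps)
  also have "\<dots> < real d / 4"
    using degree_pos by simp
  finally show ?thesis
    using leading unfolding poly_pderiv_P by linarith
qed

lemma pderiv_P_nonzero_between_roots:
  assumes "poly P a = 0" "poly P b = 0" "a \<le> c" "c \<le> b" "0 < a \<or> b < 0"
  shows "poly (pderiv P) c \<noteq> 0"
proof -
  have "1/2 \<le> \<bar>c\<bar> ^ d \<and> \<bar>c\<bar> ^ d \<le> 2"
    using abs_power_between[OF assms(3-5)] root_bounds[OF assms(1)] root_bounds[OF assms(2)] by blast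
  then show ?thesis using pderiv_P_nonzero by blast
qed

lemma num_pos_roots_P: "num_pos_roots P = (if \<exists>x>0. poly P x = 0 then 1 else 0)"
  unfolding num_pos_roots_def
  by (rule sum_order_roots_eq_indicator[OF P_nonzero]) (use pderiv_P_nonzero_between_roots in auto)

lemma num_neg_roots_P: "num_neg_roots P = (if \<exists>x<0. poly P x = 0 then 1 else 0)"
  unfolding num_neg_roots_def
  by (rule sum_order_roots_eq_indicator[OF P_nonzero]) (use pderiv_P_nonzero_between_roots in auto)

lemma two_le_two_power: "(2::real) \<le> 2 ^ d"
  using power_increasing[of 1 d "2::real"] degree_pos by simp

lemma exists_pos_root_iff: "(\<exists>x>0. poly P x = 0) \<longleftrightarrow> s 0 = -1"
proof
  assume "\<exists>x>0. poly P x = 0"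
  then obtain x where "0 < x" "poly P x = 0" by blast
  then have "s 0 < 0" using root_bounds[of x] by (simp add: mult_less_0_iff)
  then show "s 0 = -1" using signs by force
next
  assume s0: "s 0 = -1"
  have "sgn (poly P 2) = 1" using sgn_poly_P_far[of 2] two_le_two_power by simp
  then have "0 < poly P 2" by (simp add: sgn_1_pos)
  then show "\<exists>x>0. poly P x = 0"
    using poly_IVT_pos[of 0 2 P] s0 by (auto simp: poly_P_0)
qed

lemma exists_neg_root_iff: "(\<exists>x<0. poly P x = 0) \<longleftrightarrow> (-1) ^ d * s 0 = -1"
proof
  assume "\<exists>x<0. poly P x = 0"
  then obtain x where "x < 0" "poly P x = 0" by blast
  moreover have "x ^ d = (-1) ^ d * \<bar>x\<bar> ^ d"
    using \<open>x < 0\<close> by (simp flip: power_mult_distrib)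
  ultimately have "(-1) ^ d * s 0 * \<bar>x\<bar> ^ d < 0" "0 < \<bar>x\<bar> ^ d"
    using root_bounds[of x] by (metis mult.commute mult.assoc, simp)
  then have "(-1) ^ d * s 0 < 0" by (simp add: mult_less_0_iff)
  then show "(-1) ^ d * s 0 = -1" using signs by (cases "even d") force+
next
  assume sign: "(-1) ^ d * s 0 = -1"
  have "sgn (poly P (-2)) = (-1) ^ d"
    using sgn_poly_P_far[of "-2"] two_le_two_power by (cases "even d") simp_all
  moreover have "sgn (s 0) = s 0" using signs by force
  ultimately have "sgn (poly P (-2) * poly P 0) = -1"
    using sign by (simp add: sgn_mult poly_P_0)
  then have "poly P (-2) * poly P 0 < 0" by (simp add: sgn_1_neg)
  then show "\<exists>x<0. poly P x = 0"
    using poly_IVT[of "-2" 0 P] by auto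
qed

lemma realizes_P:
  assumes "s d = 1"
  shows "realizes P d s (if s 0 = -1 then 1 else 0) (if (-1) ^ d * s 0 = -1 then 1 else 0)"
  unfolding realizes_def
  using P_defines_sign_pattern[OF assms] num_pos_roots_P num_neg_roots_P
    exists_pos_root_iff exists_neg_root_iff by simp

end

theorem mainTheorem1:
  fixes d :: nat and s :: "nat \<Rightarrow> real"
  assumes "d \<ge> 1"
    and "\<forall>j\<le>d. s j = 1 \<or> s j = -1"
    and "s d = 1"
  shows "(even d \<and> s 0 = 1 \<longrightarrow> (\<exists>p. realizes p d s 0 0))
       \<and> (even d \<and> s 0 = -1 \<longrightarrow> (\<exists>p. realizes p d s 1 1))
       \<and> (odd d \<and> s 0 = 1 \<longrightarrow> (\<exists>p. realizes p d s 0 1))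
       \<and> (odd d \<and> s 0 = -1 \<longrightarrow> (\<exists>p. realizes p d s 1 0))"
proof -
  interpret sign_pattern d s using assms(1,2) by unfold_locales
  show ?thesis using realizes_P[OF assms(3)] by auto
qed

end
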